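(* Let $(C^n)_{n\ge0}$, together with $(\phi^n)_{n\ge 0}$ and $E^n=-\partial_h\phi^n$, be a solution of the fully discrete scheme described in the context, and for each $n\ge0$ denote by $C^{(1,n+1)}_2$ the intermediate coefficient $C^{(1)}_2$ computed in Step 1 when computing $C^{n+1}$ from $C^n$. Then for all $n\ge1$, $$\lambda^2\,\frac{\partial_hE^{n+1}-2\,\partial_hE^{n}+\partial_hE^{n-1}}{\Delta t^2}+\partial_h\big(E^{n+1}C^{n+1}_0\big)=\partial_h^2\Big(\sqrt{2}\,T_0\,C^{(1,n+1)}_2+T_0\,C^{n+1}_0\Big)+\lambda^2\,\Delta t\,\partial_h\Big(\frac{E^{n+1}\,\partial_hE^{n+1}-E^{n}\,\partial_hE^{n}}{\Delta t}\Big).$$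
   Context: Parameters: $T_0>0$, $\lambda>0$, $\Delta t>0$, $N_H\in\mathbb{N}^*$. Mesh: $a<b$, $N_x\in\mathbb{N}^*$, $\mathcal{J}=\{1,\dots,N_x\}$, points $a=x_{1/2}<x_1<x_{3/2}<\dots<x_{N_x}<x_{N_x+1/2}=b$, $\Delta x_j=x_{j+1/2}-x_{j-1/2}$. A grid function is $C=(C_j)_{j\in\mathcal{J}}$, with indices understood periodically. Discrete derivative: $(\partial_h C)_j=(C_{j+1}-C_{j-1})/(2\Delta x_j)$. Products of grid functions are pointwise, $1$ denotes the constant grid function. Scheme: unknowns $C^n=(C^n_k)_{0\le k\le N_H}$ (grid functions), with conventions $C_{-1}=0$ and $C_k=0$ for $k>N_H$. Given $C^n$, Step 1 finds grid functions $C^{(1)}=(C^{(1)}_k)_{0\le k\le N_H}$ and $\phi^{(1)}$ with $\sum_j\Delta x_j\phi^{(1)}_j=0$ such that $\frac{C^{(1)}_1-C^n_1}{\Delta t}+\sqrt{T_0}\,\partial_hC^{(1)}_0+\sqrt{2T_0}\,\partial_hC^{(1)}_2-\frac{1}{\sqrt{T_0}}E^{(1)}=0$, $\frac{C^{(1)}_k-C^n_k}{\Delta t}+\sqrt{kT_0}\,\partial_hC^{(1)}_{k-1}+\sqrt{(k+1)T_0}\,\partial_hC^{(1)}_{k+1}=0$ for $k\in\{0,\dots,N_H\}\setminus\{1\}$, $E^{(1)}=-\partial_h\phi^{(1)}$, $-\lambda^2\partial_h^2\phi^{(1)}=C^{(1)}_0-1$. Step 2 sets $C^{n+1}_0=C^{(1)}_0$,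 $E^{n+1}=E^{(1)}$, $\phi^{n+1}=\phi^{(1)}$, and for $k=1,\dots,N_H$: $\frac{C^{n+1}_k-C^{(1)}_k}{\Delta t}-\sqrt{\frac{k}{T_0}}\,E^{n+1}\big(C^{n+1}_{k-1}-\delta_{k,1}\big)=0$ ($\delta$ the Kronecker symbol). *)

theory Defs
  imports Complex_Main
begin

text \<open>Grid functions are modelled as functions int => real; only the values at
  indices j in {1..Nx} are meaningful, and all neighbour accesses are reduced
  periodically into {1..Nx} via per.\<close>

definition per :: "nat \<Rightarrow> int \<Rightarrow> int" where
  "per Nx j = (j - 1) mod int Nx + 1"

text \<open>Cell sizes: xh i is the half point x_{i+1/2} (so xh 0 = a, xh Nx = b),
  and dxm xh j = x_{j+1/2} - x_{j-1/2}.\<close>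
definition dxm :: "(nat \<Rightarrow> real) \<Rightarrow> int \<Rightarrow> real" where
  "dxm xh j = xh (nat j) - xh (nat j - 1)"

definition dh :: "nat \<Rightarrow> (nat \<Rightarrow> real) \<Rightarrow> (int \<Rightarrow> real) \<Rightarrow> int \<Rightarrow> real" where
  "dh Nx xh C j = (C (per Nx (j + 1)) - C (per Nx (j - 1))) / (2 * dxm xh (per Nx j))"

definition cut :: "nat \<Rightarrow> (nat \<Rightarrow> int \<Rightarrow> real) \<Rightarrow> nat \<Rightarrow> int \<Rightarrow> real" where
  "cut NH F k = (if k \<le> NH then F k else (\<lambda>_. 0))"

end

theory Submission
  imports Defs
begin

text \<open>Gauss's law \<open>\<lambda>\<^sup>2 \<partial>\<^sub>h E\<^sup>n = C\<^sup>n\<^sub>0 - 1\<close> turns the second time difference of \<open>\<partial>\<^sub>h E\<close>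
  into that of the density \<open>C\<^sub>0\<close>, and the \<open>k = 0\<close> equation of Step 1 turns each density
  difference into \<open>-\<Delta>t \<surd>T\<^sub>0 \<partial>\<^sub>h\<close> of the intermediate current, the Step 1 coefficient
  \<open>C1 (n + 1) 1\<close>. The time difference
  of that current comes from chaining the \<open>k = 1\<close> equation of Step 1 with the \<open>k = 1\<close>
  equation of the preceding Step 2, and Gauss's law once more rewrites its source terms
  \<open>E (C\<^sub>0 - 1)\<close> as \<open>\<lambda>\<^sup>2 E \<partial>\<^sub>h E\<close>. Applying the linear operator \<open>\<partial>\<^sub>h\<close> to this pointwise
  momentum balance gives the identity.\<close>

lemma per_in_cells: "Nx \<ge> 1 \<Longrightarrow> per Nx i \<in> {1..int Nx}"
  unfolding per_def by (simp add: add1_zle_eq)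

lemma dh_cong:
  assumes "Nx \<ge> 1" and "\<And>i. i \<in> {1..int Nx} \<Longrightarrow> f i = g i"
  shows "dh Nx xh f j = dh Nx xh g j"
  unfolding dh_def using assms per_in_cells by metis

lemma dh_lin: "dh Nx xh (\<lambda>i. a * f i + b * g i) = (\<lambda>j. a * dh Nx xh f j + b * dh Nx xh g j)"
  unfolding dh_def
  by (simp add: fun_eq_iff add_divide_distrib[symmetric] times_divide_eq_right[symmetric] algebra_simps)

lemma dh_add: "dh Nx xh (\<lambda>i. f i + g i) = (\<lambda>j. dh Nx xh f j + dh Nx xh g j)"
  using dh_lin[of Nx xh 1 f 1 g] by simp

lemma dh_diff: "dh Nx xh (\<lambda>i. f i - g i) = (\<lambda>j. dh Nx xh f j - dh Nx xh g j)"
  using dh_lin[of Nx xh 1 f "-1" g] by simp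

lemma dh_cmult: "dh Nx xh (\<lambda>i. c * f i) = (\<lambda>j. c * dh Nx xh f j)"
  using dh_lin[of Nx xh c f 0 f] by simp

lemma dh_divide_const: "dh Nx xh (\<lambda>i. f i / c) = (\<lambda>j. dh Nx xh f j / c)"
  using dh_cmult[of Nx xh "1 / c" f] by simp

lemma gauss_law:
  assumes "Nx \<ge> 1"
    and E: "\<And>i. i \<in> {1..int Nx} \<Longrightarrow> E i = - dh Nx xh phi i"
    and poisson: "- (lmb^2) * dh Nx xh (dh Nx xh phi) j = rho - 1"
  shows "lmb^2 * dh Nx xh E j = rho - 1"
proof -
  have "dh Nx xh E j = dh Nx xh (\<lambda>i. (- 1) * dh Nx xh phi i) j"
    using assms(1) by (rule dh_cong) (simp add: E)
  with poisson show ?thesis by (simp only: dh_cmult)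
qed

lemma cut_le: "k \<le> NH \<Longrightarrow> cut NH F k = F k"
  by (simp add: cut_def)

locale hermite_poisson_scheme =
  fixes T0 lmb dt :: real and NH Nx :: nat
    and xh :: "nat \<Rightarrow> real"
    and C C1 :: "nat \<Rightarrow> nat \<Rightarrow> int \<Rightarrow> real"
    and phi E :: "nat \<Rightarrow> int \<Rightarrow> real"
  assumes T0: "T0 > 0" and dt: "dt > 0" and NH: "NH \<ge> 1" and Nx: "Nx \<ge> 1"
    and E_def: "\<And>n j. j \<in> {1..int Nx} \<Longrightarrow> E n j = - dh Nx xh (phi n) j"
    and poisson0: "\<And>j. j \<in> {1..int Nx} \<Longrightarrow>
          (- (lmb^2)) * dh Nx xh (dh Nx xh (phi 0)) j = C 0 0 j - 1"
    and step1: "\<And>n k j. k \<le> NH \<Longrightarrow> j \<in> {1..int Nx} \<Longrightarrow>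
          (C1 (Suc n) k j - C n k j) / dt
          + sqrt (real k * T0) * dh Nx xh (C1 (Suc n) (k - 1)) j
          + sqrt (real (k + 1) * T0) * dh Nx xh (cut NH (C1 (Suc n)) (k + 1)) j
          - (if k = 1 then E (Suc n) j / sqrt T0 else 0) = 0"
    and poisson: "\<And>n j. j \<in> {1..int Nx} \<Longrightarrow>
          (- (lmb^2)) * dh Nx xh (dh Nx xh (phi (Suc n))) j = C1 (Suc n) 0 j - 1"
    and step2_0: "\<And>n j. j \<in> {1..int Nx} \<Longrightarrow> C (Suc n) 0 j = C1 (Suc n) 0 j"
    and step2: "\<And>n k j. 1 \<le> k \<Longrightarrow> k \<le> NH \<Longrightarrow> j \<in> {1..int Nx} \<Longrightarrow>
          (C (Suc n) k j - C1 (Suc n) k j) / dt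
          - sqrt (real k / T0) * E (Suc n) j
              * (C (Suc n) (k - 1) j - (if k = 1 then 1 else 0)) = 0"
begin

abbreviation D :: "(int \<Rightarrow> real) \<Rightarrow> int \<Rightarrow> real" where
  "D \<equiv> dh Nx xh"

lemma density_gauss:
  assumes j: "j \<in> {1..int Nx}"
  shows "C n 0 j = 1 + lmb^2 * D (E n) j"
proof -
  have "lmb^2 * D (E n) j = C n 0 j - 1"
  proof (cases n)
    case 0
    with Nx E_def poisson0[OF j] show ?thesis by (intro gauss_law) auto
  next
    case (Suc m)
    with Nx E_def poisson[OF j, of m] step2_0[OF j] show ?thesis by (intro gauss_law) auto
  qed
  then show ?thesis by simp
qed

lemma density_update:
  assumes j: "j \<in> {1..int Nx}"
  shows "C (Suc n) 0 j - C n 0 j = - dt * sqrt T0 * D (C1 (Suc n) 1) j"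
proof -
  have "(C1 (Suc n) 0 j - C n 0 j) / dt + sqrt T0 * D (C1 (Suc n) 1) j = 0"
    using step1[OF _ j, of 0 n] NH by (simp add: cut_le)
  with dt step2_0[OF j] show ?thesis by (simp add: field_simps)
qed

lemma momentum_balance:
  assumes j: "j \<in> {1..int Nx}"
  shows "sqrt T0 * (C1 (Suc (Suc n)) 1 j - C1 (Suc n) 1 j) / dt
         = E (Suc (Suc n)) j * C (Suc (Suc n)) 0 j
           - lmb^2 * (E (Suc (Suc n)) j * D (E (Suc (Suc n))) j - E (Suc n) j * D (E (Suc n)) j)
           - T0 * D (C (Suc (Suc n)) 0) j - sqrt 2 * T0 * D (cut NH (C1 (Suc (Suc n))) 2) j"
proof -
  have DC: "D (C1 (Suc (Suc n)) 0) j = D (C (Suc (Suc n)) 0) j"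
    using Nx by (rule dh_cong) (simp add: step2_0)
  have step1_current:
    "(C1 (Suc (Suc n)) 1 j - C (Suc n) 1 j) / dt
       = E (Suc (Suc n)) j / sqrt T0 - sqrt T0 * D (C (Suc (Suc n)) 0) j
         - sqrt 2 * sqrt T0 * D (cut NH (C1 (Suc (Suc n))) 2) j"
    using step1[OF _ j, of 1 "Suc n"] NH DC by (simp add: numeral_2_eq_2 real_sqrt_mult)
  have step2_current:
    "(C (Suc n) 1 j - C1 (Suc n) 1 j) / dt = E (Suc n) j * (C (Suc n) 0 j - 1) / sqrt T0"
    using step2[OF _ _ j, of 1 n] NH by (simp add: real_sqrt_divide)
  have "sqrt T0 * (C1 (Suc (Suc n)) 1 j - C1 (Suc n) 1 j) / dt
      = sqrt T0 * ((C1 (Suc (Suc n)) 1 j - C (Suc n) 1 j) / dt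
                   + (C (Suc n) 1 j - C1 (Suc n) 1 j) / dt)"
    by (simp add: add_divide_distrib[symmetric])
  also have "\<dots> = E (Suc (Suc n)) j + E (Suc n) j * (C (Suc n) 0 j - 1)
                   - T0 * D (C (Suc (Suc n)) 0) j - sqrt 2 * T0 * D (cut NH (C1 (Suc (Suc n))) 2) j"
    unfolding step1_current step2_current using T0
    by (simp add: field_simps) (simp add: mult.assoc[symmetric])
  also have "\<dots> = E (Suc (Suc n)) j * C (Suc (Suc n)) 0 j
           - lmb^2 * (E (Suc (Suc n)) j * D (E (Suc (Suc n))) j - E (Suc n) j * D (E (Suc n)) j)
           - T0 * D (C (Suc (Suc n)) 0) j - sqrt 2 * T0 * D (cut NH (C1 (Suc (Suc n))) 2) j"
    unfolding density_gauss[OF j] by (simp add: algebra_simps)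
  finally show ?thesis .
qed

lemma second_difference_dh_E:
  assumes j: "j \<in> {1..int Nx}"
  shows "lmb^2 * (D (E (Suc (Suc n))) j - 2 * D (E (Suc n)) j + D (E n) j) / dt^2
       = - D (\<lambda>i. sqrt T0 * (C1 (Suc (Suc n)) 1 i - C1 (Suc n) 1 i) / dt) j"
proof -
  have "lmb^2 * (D (E (Suc (Suc n))) j - 2 * D (E (Suc n)) j + D (E n) j)
        = (C (Suc (Suc n)) 0 j - C (Suc n) 0 j) - (C (Suc n) 0 j - C n 0 j)"
    unfolding density_gauss[OF j] by (simp add: algebra_simps)
  also have "\<dots> = - dt * sqrt T0 * (D (C1 (Suc (Suc n)) 1) j - D (C1 (Suc n) 1) j)"
    using density_update[OF j, of n] density_update[OF j, of "Suc n"] by (simp add: algebra_simps)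
  also have "\<dots> = - (dt^2) * D (\<lambda>i. sqrt T0 * (C1 (Suc (Suc n)) 1 i - C1 (Suc n) 1 i) / dt) j"
    using dt by (simp add: dh_divide_const dh_cmult dh_diff power2_eq_square)
  finally show ?thesis
    using dt by (simp add: field_simps)
qed

lemma wave_equation:
  assumes j: "j \<in> {1..int Nx}"
  shows "lmb^2 * (D (E (Suc (Suc n))) j - 2 * D (E (Suc n)) j + D (E n) j) / dt^2
         + D (\<lambda>i. E (Suc (Suc n)) i * C (Suc (Suc n)) 0 i) j
       = D (D (\<lambda>i. sqrt 2 * T0 * cut NH (C1 (Suc (Suc n))) 2 i + T0 * C (Suc (Suc n)) 0 i)) j
         + lmb^2 * dt * D (\<lambda>i. (E (Suc (Suc n)) i * D (E (Suc (Suc n))) i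
                                  - E (Suc n) i * D (E (Suc n)) i) / dt) j"
proof -
  have "D (\<lambda>i. sqrt T0 * (C1 (Suc (Suc n)) 1 i - C1 (Suc n) 1 i) / dt) j
      = D (\<lambda>i. E (Suc (Suc n)) i * C (Suc (Suc n)) 0 i
               - lmb^2 * (E (Suc (Suc n)) i * D (E (Suc (Suc n))) i - E (Suc n) i * D (E (Suc n)) i)
               - T0 * D (C (Suc (Suc n)) 0) i - sqrt 2 * T0 * D (cut NH (C1 (Suc (Suc n))) 2) i) j"
    using Nx by (rule dh_cong) (rule momentum_balance)
  then show ?thesis
    using second_difference_dh_E[OF j, of n] dt
    by (simp add: dh_diff dh_add dh_cmult dh_divide_const)
qed

end

theorem proposition3p2:
  fixes T0 lmb dt a b :: real and NH Nx :: nat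
    and xh :: "nat \<Rightarrow> real"
    and C :: "nat \<Rightarrow> nat \<Rightarrow> int \<Rightarrow> real"
    and C1 :: "nat \<Rightarrow> nat \<Rightarrow> int \<Rightarrow> real"
    and phi E :: "nat \<Rightarrow> int \<Rightarrow> real"
  assumes T0: "T0 > 0" and lmb: "lmb > 0" and dt: "dt > 0" and NH: "NH \<ge> 1"
    and ab: "a < b" and Nx: "Nx \<ge> 1"
    and mesh0: "xh 0 = a" and meshN: "xh Nx = b"
    and mesh_mono: "\<And>i. i < Nx \<Longrightarrow> xh i < xh (Suc i)"
    and E_def: "\<And>n j. j \<in> {1..int Nx} \<Longrightarrow> E n j = - dh Nx xh (phi n) j"
    and phi_mean: "\<And>n. (\<Sum>j\<in>{1..int Nx}. dxm xh j * phi n j) = 0"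
    and poisson0: "\<And>j. j \<in> {1..int Nx} \<Longrightarrow>
          (- (lmb^2)) * dh Nx xh (dh Nx xh (phi 0)) j = C 0 0 j - 1"
    and step1: "\<And>n k j. k \<le> NH \<Longrightarrow> j \<in> {1..int Nx} \<Longrightarrow>
          (C1 (Suc n) k j - C n k j) / dt
          + sqrt (real k * T0) * dh Nx xh (C1 (Suc n) (k - 1)) j
          + sqrt (real (k + 1) * T0) * dh Nx xh (cut NH (C1 (Suc n)) (k + 1)) j
          - (if k = 1 then E (Suc n) j / sqrt T0 else 0) = 0"
    and poisson: "\<And>n j. j \<in> {1..int Nx} \<Longrightarrow>
          (- (lmb^2)) * dh Nx xh (dh Nx xh (phi (Suc n))) j = C1 (Suc n) 0 j - 1"
    and step2_0: "\<And>n j. j \<in> {1..int Nx} \<Longrightarrow> C (Suc n) 0 j = C1 (Suc n) 0 j"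
    and step2: "\<And>n k j. 1 \<le> k \<Longrightarrow> k \<le> NH \<Longrightarrow> j \<in> {1..int Nx} \<Longrightarrow>
          (C (Suc n) k j - C1 (Suc n) k j) / dt
          - sqrt (real k / T0) * E (Suc n) j
              * (C (Suc n) (k - 1) j - (if k = 1 then 1 else 0)) = 0"
    and n: "n \<ge> 1" and j: "j \<in> {1..int Nx}"
  shows "lmb^2 * (dh Nx xh (E (Suc n)) j - 2 * dh Nx xh (E n) j + dh Nx xh (E (n - 1)) j) / dt^2
         + dh Nx xh (\<lambda>i. E (Suc n) i * C (Suc n) 0 i) j
       = dh Nx xh (dh Nx xh (\<lambda>i. sqrt 2 * T0 * cut NH (C1 (Suc n)) 2 i + T0 * C (Suc n) 0 i)) j
         + lmb^2 * dt * dh Nx xh (\<lambda>i. (E (Suc n) i * dh Nx xh (E (Suc n)) i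
                                          - E n i * dh Nx xh (E n) i) / dt) j"
proof -
  interpret hermite_poisson_scheme T0 lmb dt NH Nx xh C C1 phi E
    using T0 dt NH Nx E_def poisson0 step1 poisson step2_0 step2
    by unfold_locales blast+
  obtain m where "n = Suc m" using n by (cases n) auto
  then show ?thesis using wave_equation[OF j, of m] by simp
qed

end
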